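(* Let $x,y$ be Boolean strings with $|y|\ge1$, and let $w=xy0$. Then $\mu_x(y0)\le 0$ if $\rho(xy)>\mu_x(y)=0$, and $\mu_x(y0)\le\mu_x(y)-1$ otherwise.
   Context: Characteristic strings and forks. A characteristic string is $w=w_1\dots w_n\in\{0,1\}^n$; index $i$ is honest if $w_i=0$ and adversarial if $w_i=1$. A fork for $w$ is a rooted tree with edges directed away from the root $r$ and labeling $\ell:V\to\{0,\dots,n\}$ with (F1) $\ell(r)=0$; (F2) labels strictly increasing along directed paths; (F3) each honest index labels exactly one vertex; (F4) for honest $i<j$ the vertex labeled $i$ has strictly smaller depth than the vertex labeled $j$. Write $F\vdash w$. A vertex is honest if it is the root or labeled by an honest index. A tine is a directed path from the root; its length is its number of edges, $\ell(t)$ the label of its last vertex. A fork is closed if every leaf is honest; a closed fork has a unique longest tine $\hat t$. For closed $F\vdash w$ and tine $t$: $\mathrm{gap}(t)=\mathrm{length}(\hat t)-\mathrm{length}(t)$, $\mathrm{reserve}(t)=|\{i:w_i=1,\ i>\ell(t)\}|$, $\mathrm{reach}(t)=\mathrm{reserve}(t)-\mathrm{gap}(t)$; $\rho(F)=\max_t\mathrm{reach}(t)$, $\rho(w)=\max\{\rho(F):F\vdash w\text{ closed}\}$. For $w=xy$, tines are disjoint over $y$ if they share no edge terminating at a vertex with label $>|x|$ (a tine may be paired with itself). $\mu_x(F)=\max\min\{\mathrm{reach}(t_1),\mathrm{reach}(t_2)\}$ over pairs disjoint over $y$, and $\mu_x(y)=\max\{\mu_x(F):F\vdash xy\text{ closed}\}$.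 *)

theory Defs
  imports Main
begin

text \<open>Characteristic strings are bool lists; index i (1-based, 1 \<le> i \<le> length w)
  is adversarial iff w!(i-1) = True and honest iff w!(i-1) = False.
  A fork is given by a finite vertex set V :: nat set with root 0, a parent
  function par (edges are par v \<rightarrow> v for v \<in> V - {0}) and a labelling lab.
  A tine is identified with its terminal vertex.\<close>

definition adv :: "bool list \<Rightarrow> nat \<Rightarrow> bool" where
  "adv w i \<longleftrightarrow> 1 \<le> i \<and> i \<le> length w \<and> w ! (i - 1)"

definition hon :: "bool list \<Rightarrow> nat \<Rightarrow> bool" where
  "hon w i \<longleftrightarrow> 1 \<le> i \<and> i \<le> length w \<and> \<not> w ! (i - 1)"

definition depth :: "(nat \<Rightarrow> nat) \<Rightarrow> nat \<Rightarrow> nat" where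
  "depth par v = (LEAST k. (par ^^ k) v = 0)"

definition is_fork :: "bool list \<Rightarrow> nat set \<Rightarrow> (nat \<Rightarrow> nat) \<Rightarrow> (nat \<Rightarrow> nat) \<Rightarrow> bool" where
  "is_fork w V par lab \<longleftrightarrow>
     finite V \<and> 0 \<in> V \<and> lab 0 = 0 \<and>
     (\<forall>v\<in>V. lab v \<le> length w) \<and>
     (\<forall>v\<in>V - {0}. par v \<in> V \<and> lab (par v) < lab v) \<and>
     (\<forall>v\<in>V. \<exists>k. (par ^^ k) v = 0) \<and>
     (\<forall>i. hon w i \<longrightarrow> (\<exists>!v. v \<in> V \<and> lab v = i)) \<and>
     (\<forall>u\<in>V. \<forall>v\<in>V. hon w (lab u) \<and> hon w (lab v) \<and> lab u < lab v
          \<longrightarrow> depth par u < depth par v)"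

definition honest_vertex :: "bool list \<Rightarrow> (nat \<Rightarrow> nat) \<Rightarrow> nat \<Rightarrow> bool" where
  "honest_vertex w lab v \<longleftrightarrow> v = 0 \<or> hon w (lab v)"

definition is_leaf :: "nat set \<Rightarrow> (nat \<Rightarrow> nat) \<Rightarrow> nat \<Rightarrow> bool" where
  "is_leaf V par v \<longleftrightarrow> v \<in> V \<and> \<not> (\<exists>u\<in>V - {0}. par u = v)"

definition closed_fork :: "bool list \<Rightarrow> nat set \<Rightarrow> (nat \<Rightarrow> nat) \<Rightarrow> (nat \<Rightarrow> nat) \<Rightarrow> bool" where
  "closed_fork w V par lab \<longleftrightarrow> is_fork w V par lab \<and>
     (\<forall>v. is_leaf V par v \<longrightarrow> honest_vertex w lab v)"

definition height :: "nat set \<Rightarrow> (nat \<Rightarrow> nat) \<Rightarrow> nat" where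
  "height V par = Max (depth par ` V)"

definition reserve :: "bool list \<Rightarrow> (nat \<Rightarrow> nat) \<Rightarrow> nat \<Rightarrow> nat" where
  "reserve w lab t = card {i. adv w i \<and> lab t < i}"

definition gap :: "nat set \<Rightarrow> (nat \<Rightarrow> nat) \<Rightarrow> nat \<Rightarrow> int" where
  "gap V par t = int (height V par) - int (depth par t)"

definition reach :: "bool list \<Rightarrow> nat set \<Rightarrow> (nat \<Rightarrow> nat) \<Rightarrow> (nat \<Rightarrow> nat) \<Rightarrow> nat \<Rightarrow> int" where
  "reach w V par lab t = int (reserve w lab t) - gap V par t"

definition rho_F :: "bool list \<Rightarrow> nat set \<Rightarrow> (nat \<Rightarrow> nat) \<Rightarrow> (nat \<Rightarrow> nat) \<Rightarrow> int" where
  "rho_F w V par lab = Max (reach w V par lab ` V)"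

definition rho :: "bool list \<Rightarrow> int" where
  "rho w = Max {rho_F w V par lab | V par lab. closed_fork w V par lab}"

definition on_tine :: "(nat \<Rightarrow> nat) \<Rightarrow> nat \<Rightarrow> nat \<Rightarrow> bool" where
  "on_tine par t u \<longleftrightarrow> (\<exists>k \<le> depth par t. (par ^^ k) t = u)"

text \<open>Tines are disjoint over y (where m = |x|): no common edge terminating at a
  vertex with label > m; edges are identified with their terminal vertex.\<close>
definition disjoint_over :: "nat \<Rightarrow> (nat \<Rightarrow> nat) \<Rightarrow> (nat \<Rightarrow> nat) \<Rightarrow> nat \<Rightarrow> nat \<Rightarrow> bool" where
  "disjoint_over m par lab t1 t2 \<longleftrightarrow>
     \<not> (\<exists>u. on_tine par t1 u \<and> on_tine par t2 u \<and> m < lab u)"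

definition mu_F :: "nat \<Rightarrow> bool list \<Rightarrow> nat set \<Rightarrow> (nat \<Rightarrow> nat) \<Rightarrow> (nat \<Rightarrow> nat) \<Rightarrow> int" where
  "mu_F m w V par lab = Max {min (reach w V par lab t1) (reach w V par lab t2) | t1 t2.
       t1 \<in> V \<and> t2 \<in> V \<and> disjoint_over m par lab t1 t2}"

definition mu :: "bool list \<Rightarrow> bool list \<Rightarrow> int" where
  "mu x y = Max {mu_F (length x) (x @ y) V par lab | V par lab. closed_fork (x @ y) V par lab}"

end

(*
  Let F be a fork for w0 = xy0 and z its vertex labelled |xy| + 1. The tines of F ending in
  vertices honest for w = xy form a closed fork F' for w, and every vertex of F' is shallower
  than z, so height F' < depth z <= height F. Walking down from a tine t /= z of F to its first
  vertex s in F' passes only adversarial vertices, so reserve + depth does not decrease, and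
  reach_F t < reach_F' s. The tine z itself has reach_F z <= 0, while the projection s of its
  parent has reach_F' s >= 0. Projections of tines disjoint over y stay disjoint over y, and z
  cannot end both tines of such a pair; comparing with mu_x(y) and rho(xy) gives the bound.
*)

theory Submission
  imports Defs "HOL-Library.Sublist"
begin

lemma depth_0 [simp]: "depth par 0 = 0"
  unfolding depth_def by (rule Least_eq_0) simp

lemma depth_eq_Suc_depth_par:
  assumes "v \<noteq> 0" and "(par ^^ k) v = 0"
  shows "depth par v = Suc (depth par (par v))"
proof -
  have "(LEAST k. (par ^^ k) v = 0) = Suc (LEAST k. (par ^^ Suc k) v = 0)"
    by (rule Least_Suc[where P = "\<lambda>k. (par ^^ k) v = 0", OF assms(2)]) (simp add: assms(1))
  then show ?thesis
    unfolding depth_def funpow_Suc_right comp_def .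
qed

lemma funpow_depth_eq_0: "(par ^^ k) v = 0 \<Longrightarrow> (par ^^ depth par v) v = 0"
  unfolding depth_def by (rule LeastI)

lemma funpow_neq_0_below_depth: "i < depth par v \<Longrightarrow> (par ^^ i) v \<noteq> 0"
  unfolding depth_def by (rule not_less_Least)

lemma on_tine_refl [simp]: "on_tine par t t"
  unfolding on_tine_def by (rule exI[of _ 0]) simp

lemma card_adv_above_less:
  assumes "a < b" and "adv w b"
  shows "card {i. adv w i \<and> b < i} < card {i. adv w i \<and> a < i}"
proof (rule psubset_card_mono)
  show "finite {i. adv w i \<and> a < i}"
    by (rule finite_subset[of _ "{..length w}"]) (auto simp: adv_def)
  show "{i. adv w i \<and> b < i} \<subset> {i. adv w i \<and> a < i}"
    using assms by auto
qed

lemma adv_snoc_False: "adv (w @ [False]) i \<longleftrightarrow> adv w i"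
  unfolding adv_def by (cases "i \<le> length w") (auto simp: nth_append)

lemma hon_snoc_False: "hon (w @ [False]) i \<longleftrightarrow> hon w i \<or> i = Suc (length w)"
  unfolding hon_def by (cases "i \<le> length w") (auto simp: nth_append)

lemma reserve_snoc_False: "reserve (w @ [False]) lab t = reserve w lab t"
  unfolding reserve_def adv_snoc_False ..

lemma reserve_le_length: "reserve w lab t \<le> length w"
proof -
  have "{i. adv w i \<and> lab t < i} \<subseteq> {1..length w}"
    unfolding adv_def by auto
  then show ?thesis
    unfolding reserve_def using card_mono[of "{1..length w}"] by fastforce
qed

lemma hon_prefix: "prefix u w \<Longrightarrow> hon u i \<Longrightarrow> hon w i"
  unfolding hon_def prefix_def by (auto simp: nth_append)

locale fork =
  fixes w :: "bool list" and V :: "nat set" and par lab :: "nat \<Rightarrow> nat"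
  assumes is_fork: "is_fork w V par lab"
begin

lemma finite_V: "finite V"
  and root_in_V: "0 \<in> V"
  and lab_root [simp]: "lab 0 = 0"
  and lab_le_length: "v \<in> V \<Longrightarrow> lab v \<le> length w"
  and par_in_V: "v \<in> V \<Longrightarrow> v \<noteq> 0 \<Longrightarrow> par v \<in> V"
  and lab_par_less: "v \<in> V \<Longrightarrow> v \<noteq> 0 \<Longrightarrow> lab (par v) < lab v"
  and reaches_root: "v \<in> V \<Longrightarrow> \<exists>k. (par ^^ k) v = 0"
  and honest_label_unique: "hon w i \<Longrightarrow> \<exists>!v. v \<in> V \<and> lab v = i"
  and depth_less_if_honest: "u \<in> V \<Longrightarrow> v \<in> V \<Longrightarrow> hon w (lab u) \<Longrightarrow> hon w (lab v) \<Longrightarrow>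
    lab u < lab v \<Longrightarrow> depth par u < depth par v"
  using is_fork unfolding is_fork_def by blast+

lemma depth_par: "v \<in> V \<Longrightarrow> v \<noteq> 0 \<Longrightarrow> depth par v = Suc (depth par (par v))"
  using reaches_root depth_eq_Suc_depth_par by blast

lemma funpow_depth: "v \<in> V \<Longrightarrow> (par ^^ depth par v) v = 0"
  using reaches_root funpow_depth_eq_0 by blast

lemma ancestor:
  assumes "v \<in> V" and "i \<le> depth par v"
  shows "(par ^^ i) v \<in> V \<and> depth par ((par ^^ i) v) = depth par v - i
    \<and> lab ((par ^^ i) v) + i \<le> lab v"
  using assms(2)
proof (induction i)
  case 0
  then show ?case using assms(1) by simp
next
  case (Suc i)
  let ?u = "(par ^^ i) v"
  have IH: "?u \<in> V" "depth par ?u = depth par v - i" "lab ?u + i \<le> lab v"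
    using Suc by simp_all
  have "?u \<noteq> 0"
    using funpow_neq_0_below_depth Suc.prems by (metis Suc_le_lessD)
  then have "par ?u \<in> V" "depth par ?u = Suc (depth par (par ?u))" "lab (par ?u) < lab ?u"
    using IH(1) par_in_V depth_par lab_par_less by simp_all
  then show ?case
    using IH Suc.prems by simp
qed

lemma depth_le_lab: "v \<in> V \<Longrightarrow> depth par v \<le> lab v"
  using ancestor[of v "depth par v"] by simp

lemma depth_le_height: "v \<in> V \<Longrightarrow> depth par v \<le> height V par"
  unfolding height_def using finite_V by simp

lemma height_le_length: "height V par \<le> length w"
proof -
  have "V \<noteq> {}" and "\<forall>v\<in>V. depth par v \<le> length w"
    using root_in_V depth_le_lab lab_le_length by (auto intro: le_trans)
  then show ?thesis
    unfolding height_def using finite_V by simp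
qed

lemma on_tine_in_V: "t \<in> V \<Longrightarrow> on_tine par t u \<Longrightarrow> u \<in> V"
  unfolding on_tine_def using ancestor by blast

lemma on_tine_trans:
  assumes "t \<in> V" and "on_tine par t s" and "on_tine par s u"
  shows "on_tine par t u"
proof -
  obtain k where k: "k \<le> depth par t" "(par ^^ k) t = s"
    using assms(2) unfolding on_tine_def by blast
  obtain l where l: "l \<le> depth par s" "(par ^^ l) s = u"
    using assms(3) unfolding on_tine_def by blast
  have "depth par s = depth par t - k"
    using ancestor[OF assms(1) k(1)] k(2) by simp
  with k l have "l + k \<le> depth par t" and "(par ^^ (l + k)) t = u"
    by (auto simp: funpow_add)
  then show ?thesis
    unfolding on_tine_def by blast
qed

lemma disjoint_over_on_tine:
  assumes "t1 \<in> V" "t2 \<in> V" "on_tine par t1 s1" "on_tine par t2 s2"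
    and "disjoint_over m par lab t1 t2"
  shows "disjoint_over m par lab s1 s2"
  using assms on_tine_trans unfolding disjoint_over_def by blast

lemma reserve_ancestor:
  assumes "v \<in> V" and "j \<le> depth par v" and "\<forall>i<j. adv w (lab ((par ^^ i) v))"
  shows "reserve w lab v + j \<le> reserve w lab ((par ^^ j) v)"
  using assms(2,3)
proof (induction j)
  case 0
  then show ?case by simp
next
  case (Suc j)
  let ?u = "(par ^^ j) v"
  have "?u \<in> V" "?u \<noteq> 0"
    using ancestor[OF assms(1)] funpow_neq_0_below_depth Suc.prems(1) by auto
  then have "reserve w lab ?u < reserve w lab (par ?u)"
    unfolding reserve_def using Suc.prems(2) lab_par_less by (auto intro: card_adv_above_less)
  with Suc show ?case by simp
qed

lemma reach_bounds: "v \<in> V \<Longrightarrow> \<bar>reach w V par lab v\<bar> \<le> int (length w)"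
  using depth_le_height[of v] height_le_length reserve_le_length[of w lab v]
  unfolding reach_def gap_def by linarith

lemma reach_le_rho_F: "v \<in> V \<Longrightarrow> reach w V par lab v \<le> rho_F w V par lab"
  unfolding rho_F_def using finite_V by simp

lemma rho_F_attained: "\<exists>v\<in>V. rho_F w V par lab = reach w V par lab v"
proof -
  have "Max (reach w V par lab ` V) \<in> reach w V par lab ` V"
    using finite_V root_in_V by (intro Max_in) auto
  then show ?thesis
    unfolding rho_F_def by auto
qed

lemma finite_pair_reaches:
  "finite {min (reach w V par lab t1) (reach w V par lab t2) | t1 t2.
     t1 \<in> V \<and> t2 \<in> V \<and> disjoint_over m par lab t1 t2}"
  by (rule finite_subset[of _ "(\<lambda>(t1, t2). min (reach w V par lab t1) (reach w V par lab t2)) ` (V \<times> V)"])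
    (use finite_V in fastforce)+

lemma min_reach_le_mu_F:
  "t1 \<in> V \<Longrightarrow> t2 \<in> V \<Longrightarrow> disjoint_over m par lab t1 t2 \<Longrightarrow>
    min (reach w V par lab t1) (reach w V par lab t2) \<le> mu_F m w V par lab"
  unfolding mu_F_def by (rule Max_ge[OF finite_pair_reaches]) auto

lemma mu_F_attained:
  "\<exists>t1\<in>V. \<exists>t2\<in>V. disjoint_over m par lab t1 t2 \<and>
    mu_F m w V par lab = min (reach w V par lab t1) (reach w V par lab t2)"
proof -
  have "disjoint_over m par lab 0 0"
    unfolding disjoint_over_def on_tine_def by simp
  then have "{min (reach w V par lab t1) (reach w V par lab t2) | t1 t2.
     t1 \<in> V \<and> t2 \<in> V \<and> disjoint_over m par lab t1 t2} \<noteq> {}"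
    using root_in_V by blast
  from Max_in[OF finite_pair_reaches this] show ?thesis
    unfolding mu_F_def by blast
qed

end

definition prefix_vertices :: "bool list \<Rightarrow> nat set \<Rightarrow> (nat \<Rightarrow> nat) \<Rightarrow> (nat \<Rightarrow> nat) \<Rightarrow> nat set" where
  "prefix_vertices u V par lab = {v. \<exists>h\<in>V. honest_vertex u lab h \<and> on_tine par h v}"

context fork
begin

lemma prefix_vertices_subset: "prefix_vertices u V par lab \<subseteq> V"
  unfolding prefix_vertices_def using on_tine_in_V by blast

lemma honest_in_prefix_vertices: "h \<in> V \<Longrightarrow> honest_vertex u lab h \<Longrightarrow> h \<in> prefix_vertices u V par lab"
  unfolding prefix_vertices_def by auto

lemma lab_prefix_vertices:
  assumes "v \<in> prefix_vertices u V par lab"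
  shows "lab v \<le> length u"
proof -
  obtain h k where h: "h \<in> V" "honest_vertex u lab h" and k: "k \<le> depth par h" "(par ^^ k) h = v"
    using assms unfolding prefix_vertices_def on_tine_def by blast
  have "lab h \<le> length u"
    using h(2) unfolding honest_vertex_def hon_def by auto
  then show ?thesis
    using ancestor[OF h(1) k(1)] k(2) by simp
qed

lemma par_in_prefix_vertices:
  assumes "v \<in> prefix_vertices u V par lab" and "v \<noteq> 0"
  shows "par v \<in> prefix_vertices u V par lab"
proof -
  obtain h k where h: "h \<in> V" "honest_vertex u lab h" and k: "k \<le> depth par h" "(par ^^ k) h = v"
    using assms(1) unfolding prefix_vertices_def on_tine_def by blast
  have "k \<noteq> depth par h"
    using funpow_depth[OF h(1)] k(2) assms(2) by auto
  with k have "Suc k \<le> depth par h" and "(par ^^ Suc k) h = par v"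
    by auto
  then show ?thesis
    using h unfolding prefix_vertices_def on_tine_def by blast
qed

lemma honest_if_leaf_prefix_vertices:
  assumes "is_leaf (prefix_vertices u V par lab) par v"
  shows "honest_vertex u lab v"
proof -
  obtain h k where h: "h \<in> V" "honest_vertex u lab h" and k: "k \<le> depth par h" "(par ^^ k) h = v"
    using assms unfolding is_leaf_def prefix_vertices_def on_tine_def by blast
  show ?thesis
  proof (cases k)
    case 0
    then show ?thesis using h k by simp
  next
    case (Suc k')
    let ?c = "(par ^^ k') h"
    have "on_tine par h ?c"
      unfolding on_tine_def using k(1) Suc by (auto intro!: exI[of _ k'])
    then have "?c \<in> prefix_vertices u V par lab"
      using h unfolding prefix_vertices_def by blast
    moreover have "?c \<noteq> 0"
      using funpow_neq_0_below_depth k(1) Suc by simp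
    moreover have "par ?c = v"
      using k(2) Suc by simp
    ultimately have "?c \<in> prefix_vertices u V par lab - {0} \<and> par ?c = v"
      by simp
    then show ?thesis
      using assms unfolding is_leaf_def by blast
  qed
qed

lemma closed_fork_prefix_vertices:
  assumes "prefix u w"
  shows "closed_fork u (prefix_vertices u V par lab) par lab"
proof -
  let ?P = "prefix_vertices u V par lab"
  have in_V: "v \<in> V" if "v \<in> ?P" for v
    using prefix_vertices_subset that ..
  have root: "0 \<in> ?P"
    using honest_in_prefix_vertices[OF root_in_V] unfolding honest_vertex_def by simp
  have labs: "\<forall>v\<in>?P. lab v \<le> length u"
    using lab_prefix_vertices by blast
  have pars: "\<forall>v\<in>?P - {0}. par v \<in> ?P \<and> lab (par v) < lab v"
    using par_in_prefix_vertices lab_par_less in_V by simp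
  have reaches: "\<forall>v\<in>?P. \<exists>k. (par ^^ k) v = 0"
    using reaches_root in_V by simp
  have unique: "\<forall>i. hon u i \<longrightarrow> (\<exists>!v. v \<in> ?P \<and> lab v = i)"
  proof (intro allI impI)
    fix i assume hi: "hon u i"
    obtain v where "v \<in> V" "lab v = i" and uniq: "\<And>v'. v' \<in> V \<Longrightarrow> lab v' = i \<Longrightarrow> v' = v"
      using honest_label_unique hon_prefix[OF assms hi] by blast
    moreover have "v \<in> ?P"
      using honest_in_prefix_vertices \<open>v \<in> V\<close> \<open>lab v = i\<close> hi
      unfolding honest_vertex_def by simp
    ultimately show "\<exists>!v. v \<in> ?P \<and> lab v = i"
      using in_V by blast
  qed
  have depths: "\<forall>v\<in>?P. \<forall>v'\<in>?P. hon u (lab v) \<and> hon u (lab v') \<and> lab v < lab v'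
      \<longrightarrow> depth par v < depth par v'"
    using depth_less_if_honest hon_prefix[OF assms] in_V by simp
  have "is_fork u ?P par lab"
    unfolding is_fork_def
    using finite_subset[OF prefix_vertices_subset finite_V] root labs pars reaches unique depths
    by simp
  then show ?thesis
    unfolding closed_fork_def using honest_if_leaf_prefix_vertices by blast
qed

end

lemma finite_fork_values:
  assumes "\<And>V par lab. closed_fork w V par lab \<Longrightarrow> \<exists>v\<in>V. f V par lab = reach w V par lab v"
  shows "finite {f V par lab | V par lab. closed_fork w V par lab}"
proof (rule finite_subset)
  show "{f V par lab | V par lab. closed_fork w V par lab} \<subseteq> {- int (length w) .. int (length w)}"
  proof
    fix r assume "r \<in> {f V par lab | V par lab. closed_fork w V par lab}"
    then obtain V par lab v where "closed_fork w V par lab" "v \<in> V" "r = reach w V par lab v"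
      using assms by blast
    then show "r \<in> {- int (length w) .. int (length w)}"
      using fork.reach_bounds[of w V par lab v] unfolding closed_fork_def fork_def
      by (simp add: abs_le_iff)
  qed
qed simp

lemma finite_mu_F_values: "finite {mu_F m w V par lab | V par lab. closed_fork w V par lab}"
  by (rule finite_fork_values) (metis closed_fork_def fork.mu_F_attained fork_def min_def)

lemma finite_rho_F_values: "finite {rho_F w V par lab | V par lab. closed_fork w V par lab}"
  by (rule finite_fork_values) (metis closed_fork_def fork.rho_F_attained fork_def)

lemma mu_F_le_mu: "closed_fork (x @ y) V par lab \<Longrightarrow> mu_F (length x) (x @ y) V par lab \<le> mu x y"
  unfolding mu_def by (rule Max_ge[OF finite_mu_F_values]) blast

lemma rho_F_le_rho: "closed_fork w V par lab \<Longrightarrow> rho_F w V par lab \<le> rho w"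
  unfolding rho_def by (rule Max_ge[OF finite_rho_F_values]) blast

definition last_honest_index :: "bool list \<Rightarrow> nat" where
  "last_honest_index w = Max (insert 0 {i. hon w i})"

lemma funpow_pred: "((\<lambda>v. v - 1) ^^ k) v = v - k"
  by (induction k) simp_all

lemma depth_pred: "depth (\<lambda>v. v - 1) v = v"
  unfolding depth_def funpow_pred by (rule Least_equality) simp_all

lemma closed_path_fork: "closed_fork w {0..last_honest_index w} (\<lambda>v. v - 1) id"
proof -
  let ?k = "last_honest_index w"
  have fin: "finite (insert 0 {i. hon w i})"
    by (rule finite_subset[of _ "{..length w}"]) (auto simp: hon_def)
  have "?k \<in> insert 0 {i. hon w i}"
    unfolding last_honest_index_def using fin by (intro Max_in) auto
  then have top: "?k = 0 \<or> hon w ?k" and "?k \<le> length w"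
    by (auto simp: hon_def)
  have "hon w i \<Longrightarrow> i \<le> ?k" for i
    unfolding last_honest_index_def using fin by (intro Max_ge) auto
  then have "is_fork w {0..?k} (\<lambda>v. v - 1) id"
    unfolding is_fork_def depth_pred funpow_pred using \<open>?k \<le> length w\<close> by auto
  moreover have "v = ?k" if leaf: "is_leaf {0..?k} (\<lambda>v. v - 1) v" for v
  proof (rule ccontr)
    assume "v \<noteq> ?k"
    with leaf have "Suc v \<in> {0..?k} - {0}"
      unfolding is_leaf_def by auto
    with leaf show False
      unfolding is_leaf_def by (metis diff_Suc_1)
  qed
  ultimately show ?thesis
    unfolding closed_fork_def honest_vertex_def using top by auto
qed

lemma mu_attained:
  "\<exists>V par lab. closed_fork (x @ y) V par lab \<and> mu x y = mu_F (length x) (x @ y) V par lab"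
proof -
  let ?S = "{mu_F (length x) (x @ y) V par lab | V par lab. closed_fork (x @ y) V par lab}"
  have "?S \<noteq> {}"
    using closed_path_fork by blast
  from Max_in[OF finite_mu_F_values this] show ?thesis
    unfolding mu_def by auto
qed

lemma min_le_decreased_bound:
  fixes r r' b b' M R :: int
  assumes "min b b' \<le> M" and "b \<le> R" and "b' \<le> R"
    and "r < b \<or> r \<le> 0 \<and> 0 \<le> b" and "r' < b' \<or> r' \<le> 0 \<and> 0 \<le> b'"
    and "r < b \<or> r' < b'"
  shows "min r r' \<le> (if M < R \<and> M = 0 then 0 else M - 1)"
  using assms by (smt (verit))

locale honest_extension = fork "w @ [False]" V par lab
  for w :: "bool list" and V par lab
begin

abbreviation V\<^sub>w :: "nat set" where
  "V\<^sub>w \<equiv> prefix_vertices w V par lab"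

definition last_vertex :: nat where
  "last_vertex = (THE v. v \<in> V \<and> lab v = Suc (length w))"

lemma ex1_last_vertex: "\<exists>!v. v \<in> V \<and> lab v = Suc (length w)"
  using honest_label_unique[of "Suc (length w)"] by (simp add: hon_snoc_False)

lemma last_vertex_in_V: "last_vertex \<in> V"
  and lab_last_vertex: "lab last_vertex = Suc (length w)"
  using theI'[OF ex1_last_vertex] unfolding last_vertex_def by simp_all

lemma last_vertex_unique: "v \<in> V \<Longrightarrow> lab v = Suc (length w) \<Longrightarrow> v = last_vertex"
  unfolding last_vertex_def by (rule the1_equality[OF ex1_last_vertex, symmetric]) simp

lemma last_vertex_neq_0: "last_vertex \<noteq> 0"
proof
  assume "last_vertex = 0"
  then show False
    using lab_last_vertex by simp
qed

lemma reserve_last_vertex: "reserve w lab last_vertex = 0"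
  unfolding reserve_def lab_last_vertex by (simp add: adv_def)

lemma depth_prefix_less_last_vertex:
  assumes "v \<in> V\<^sub>w"
  shows "depth par v < depth par last_vertex"
proof -
  obtain h k where h: "h \<in> V" "honest_vertex w lab h" and k: "k \<le> depth par h" "(par ^^ k) h = v"
    using assms unfolding prefix_vertices_def on_tine_def by blast
  have "depth par h < depth par last_vertex"
  proof (cases "h = 0")
    case True
    then show ?thesis
      using depth_par[OF last_vertex_in_V last_vertex_neq_0] by simp
  next
    case False
    with h(2) have "hon w (lab h)"
      unfolding honest_vertex_def by simp
    then have "hon (w @ [False]) (lab h)" and "lab h < lab last_vertex"
      by (simp add: hon_snoc_False, simp add: hon_def lab_last_vertex)
    moreover have "hon (w @ [False]) (lab last_vertex)"
      by (simp add: hon_snoc_False lab_last_vertex)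
    ultimately show ?thesis
      using depth_less_if_honest[OF h(1) last_vertex_in_V] by blast
  qed
  then show ?thesis
    using ancestor[OF h(1) k(1)] k(2) by simp
qed

lemma height_prefix_less_depth_last_vertex: "height V\<^sub>w par < depth par last_vertex"
proof -
  have "finite V\<^sub>w" and "0 \<in> V\<^sub>w"
    using finite_subset[OF prefix_vertices_subset finite_V]
      honest_in_prefix_vertices[OF root_in_V] by (simp_all add: honest_vertex_def)
  then have "height V\<^sub>w par \<in> depth par ` V\<^sub>w"
    unfolding height_def by (intro Max_in) auto
  then show ?thesis
    using depth_prefix_less_last_vertex by auto
qed

lemma adv_outside_prefix:
  assumes "v \<in> V" and "v \<notin> V\<^sub>w" and "v \<noteq> last_vertex"
  shows "adv w (lab v)"
proof -
  have "v \<noteq> 0"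
    using assms(2) honest_in_prefix_vertices[OF root_in_V, of w]
    by (cases "v = 0") (auto simp: honest_vertex_def)
  then have "1 \<le> lab v"
    using lab_par_less[OF assms(1)] by simp
  moreover have "lab v \<le> length w"
    using lab_le_length[OF assms(1)] last_vertex_unique[OF assms(1)] assms(3) by fastforce
  moreover have "\<not> hon w (lab v)"
    using honest_in_prefix_vertices[OF assms(1)] assms(2) by (auto simp: honest_vertex_def)
  ultimately show ?thesis
    unfolding adv_def hon_def by simp
qed

lemma projection_to_prefix:
  assumes "t \<in> V" and "t \<noteq> last_vertex"
  shows "\<exists>s\<in>V\<^sub>w. on_tine par t s \<and> reserve w lab t + depth par t \<le> reserve w lab s + depth par s"
proof -
  define j where "j = (LEAST j. (par ^^ j) t \<in> V\<^sub>w)"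
  let ?s = "(par ^^ j) t"
  have "(par ^^ depth par t) t \<in> V\<^sub>w"
    using funpow_depth[OF assms(1)] honest_in_prefix_vertices[OF root_in_V]
    by (simp add: honest_vertex_def)
  then have s: "?s \<in> V\<^sub>w" and j: "j \<le> depth par t"
    unfolding j_def by (auto intro: LeastI Least_le)
  have "adv (w @ [False]) (lab ((par ^^ i) t))" if "i < j" for i
  proof -
    have "(par ^^ i) t \<notin> V\<^sub>w"
      using that unfolding j_def by (rule not_less_Least)
    moreover have "(par ^^ i) t \<noteq> last_vertex"
    proof (cases i)
      case 0
      then show ?thesis using assms(2) by simp
    next
      case (Suc i')
      then have "lab ((par ^^ i) t) < Suc (length w)"
        using ancestor[OF assms(1), of i] that j lab_le_length[OF assms(1)] by simp
      then show ?thesis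
        using lab_last_vertex by auto
    qed
    ultimately show ?thesis
      using adv_outside_prefix ancestor[OF assms(1), of i] that j adv_snoc_False by simp
  qed
  then have "reserve w lab t + j \<le> reserve w lab ?s"
    using reserve_ancestor[OF assms(1) j] by (simp add: reserve_snoc_False)
  moreover have "depth par ?s = depth par t - j"
    using ancestor[OF assms(1) j] by simp
  moreover have "on_tine par t ?s"
    unfolding on_tine_def using j by blast
  ultimately show ?thesis
    using s j by (intro bexI[of _ ?s]) auto
qed

lemma reach_snoc_False_eq:
  "reach (w @ [False]) V par lab v = int (reserve w lab v) + int (depth par v) - int (height V par)"
  unfolding reach_def gap_def reserve_snoc_False by simp

lemma reach_prefix_eq:
  "reach w V\<^sub>w par lab v = int (reserve w lab v) + int (depth par v) - int (height V\<^sub>w par)"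
  unfolding reach_def gap_def by simp

lemma reach_projection_to_prefix:
  assumes "t \<in> V"
  shows "\<exists>s\<in>V\<^sub>w. on_tine par t s \<and>
    (if t = last_vertex
     then reach (w @ [False]) V par lab t \<le> 0 \<and> 0 \<le> reach w V\<^sub>w par lab s
     else reach (w @ [False]) V par lab t < reach w V\<^sub>w par lab s)"
proof -
  have heights: "height V\<^sub>w par < depth par last_vertex" "depth par last_vertex \<le> height V par"
    using height_prefix_less_depth_last_vertex depth_le_height[OF last_vertex_in_V] by simp_all
  show ?thesis
  proof (cases "t = last_vertex")
    case True
    let ?p = "par last_vertex"
    have p: "?p \<in> V" "depth par last_vertex = Suc (depth par ?p)"
      using par_in_V depth_par last_vertex_in_V last_vertex_neq_0 by simp_all
    have "lab ?p < lab last_vertex"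
      using lab_par_less last_vertex_in_V last_vertex_neq_0 by simp
    then have "?p \<noteq> last_vertex"
      by auto
    then obtain s where s: "s \<in> V\<^sub>w" "on_tine par ?p s"
      and le: "reserve w lab ?p + depth par ?p \<le> reserve w lab s + depth par s"
      using projection_to_prefix[OF p(1)] by blast
    have "on_tine par last_vertex ?p"
      unfolding on_tine_def using p(2) by (intro exI[of _ 1]) simp
    then have "on_tine par t s"
      using on_tine_trans[OF last_vertex_in_V _ s(2)] True by blast
    moreover have "reach (w @ [False]) V par lab t \<le> 0"
      using True reach_snoc_False_eq reserve_last_vertex heights(2) by simp
    moreover have "0 \<le> reach w V\<^sub>w par lab s"
      using reach_prefix_eq le heights(1) p(2) by simp
    ultimately show ?thesis
      using s(1) True by auto
  next
    case False
    then obtain s where "s \<in> V\<^sub>w" "on_tine par t s"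
      and "reserve w lab t + depth par t \<le> reserve w lab s + depth par s"
      using projection_to_prefix[OF assms] by blast
    then show ?thesis
      using False reach_snoc_False_eq reach_prefix_eq heights by (intro bexI[of _ s]) auto
  qed
qed

lemma mu_F_snoc_False_le:
  assumes "m \<le> length w" and M: "mu_F m w V\<^sub>w par lab \<le> M" and R: "rho_F w V\<^sub>w par lab \<le> R"
  shows "mu_F m (w @ [False]) V par lab \<le> (if M < R \<and> M = 0 then 0 else M - 1)"
proof -
  interpret prefix: fork w V\<^sub>w par lab
    using closed_fork_prefix_vertices[of w] unfolding closed_fork_def fork_def by simp
  obtain t1 t2 where t: "t1 \<in> V" "t2 \<in> V" "disjoint_over m par lab t1 t2"
    and mu_eq: "mu_F m (w @ [False]) V par lab
      = min (reach (w @ [False]) V par lab t1) (reach (w @ [False]) V par lab t2)"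
    using mu_F_attained by blast
  obtain s1 s2 where s: "s1 \<in> V\<^sub>w" "s2 \<in> V\<^sub>w" "on_tine par t1 s1" "on_tine par t2 s2"
    and r1: "if t1 = last_vertex
       then reach (w @ [False]) V par lab t1 \<le> 0 \<and> 0 \<le> reach w V\<^sub>w par lab s1
       else reach (w @ [False]) V par lab t1 < reach w V\<^sub>w par lab s1"
    and r2: "if t2 = last_vertex
       then reach (w @ [False]) V par lab t2 \<le> 0 \<and> 0 \<le> reach w V\<^sub>w par lab s2
       else reach (w @ [False]) V par lab t2 < reach w V\<^sub>w par lab s2"
    using reach_projection_to_prefix t(1,2) by metis
  \<comment> \<open>the new honest vertex lies over y, so it cannot end both of two tines disjoint over y\<close>
  have "t1 \<noteq> last_vertex \<or> t2 \<noteq> last_vertex"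
  proof (rule ccontr)
    assume "\<not> (t1 \<noteq> last_vertex \<or> t2 \<noteq> last_vertex)"
    then have "on_tine par t1 last_vertex" and "on_tine par t2 last_vertex"
      by simp_all
    then show False
      using t(3) lab_last_vertex assms(1) unfolding disjoint_over_def by auto
  qed
  moreover have "min (reach w V\<^sub>w par lab s1) (reach w V\<^sub>w par lab s2) \<le> M"
    using prefix.min_reach_le_mu_F[OF s(1,2) disjoint_over_on_tine[OF t(1,2) s(3,4) t(3)]] M
    by linarith
  moreover have "reach w V\<^sub>w par lab s1 \<le> R" "reach w V\<^sub>w par lab s2 \<le> R"
    using prefix.reach_le_rho_F s(1,2) R by force+
  ultimately show ?thesis
    unfolding mu_eq using r1 r2
    by (intro min_le_decreased_bound[where b = "reach w V\<^sub>w par lab s1"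
          and b' = "reach w V\<^sub>w par lab s2"]) (auto split: if_splits)
qed

end

theorem proposition2:
  fixes x y :: "bool list"
  assumes "length y \<ge> 1"
  shows "if rho (x @ y) > mu x y \<and> mu x y = 0
         then mu x (y @ [False]) \<le> 0
         else mu x (y @ [False]) \<le> mu x y - 1"
proof -
  obtain V par lab where "closed_fork (x @ y @ [False]) V par lab"
    and mu_eq: "mu x (y @ [False]) = mu_F (length x) (x @ y @ [False]) V par lab"
    using mu_attained[of x "y @ [False]"] by auto
  then interpret honest_extension "x @ y" V par lab
    unfolding closed_fork_def honest_extension_def fork_def by simp
  have "closed_fork (x @ y) V\<^sub>w par lab"
    by (rule closed_fork_prefix_vertices) simp
  then have "mu_F (length x) (x @ y) V\<^sub>w par lab \<le> mu x y"
    and "rho_F (x @ y) V\<^sub>w par lab \<le> rho (x @ y)"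
    by (rule mu_F_le_mu, rule rho_F_le_rho)
  then have "mu_F (length x) ((x @ y) @ [False]) V par lab
      \<le> (if mu x y < rho (x @ y) \<and> mu x y = 0 then 0 else mu x y - 1)"
    by (intro mu_F_snoc_False_le) simp_all
  then show ?thesis
    using mu_eq by (simp split: if_split_asm)
qed

end
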